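(* Let $S=[B_{r-1},[B_r,F_X^+]_q]_q$ and $S^\tau=[B_{\tau(r-1)},[B_{\tau(r)},F_X^-]_q]_q$, and let $\mathcal Z_r=-(1-q^{-2})E_X^+L_{\tau(r)}$, $\mathcal Z_{\tau(r)}=-(1-q^{-2})E_X^-L_r$. Then $\mathcal Z_{\tau(r)}S=q^{-1}S\mathcal Z_{\tau(r)}+(1-q^{-2})[B_{r-1},B_r]_qL_rK_X$ and $\mathcal Z_rS^\tau=q^{-1}S^\tau\mathcal Z_r+(1-q^{-2})[B_{\tau(r-1)},B_{\tau(r)}]_qL_{\tau(r)}K_X$ hold in $B_{\mathbf c}$.
   Context: Let $\mathbb K$ be a field of characteristic zero and $q$ an indeterminate. $n\ge1$, $I=\{1,\dots,n\}$, $\mathfrak g=\mathfrak{sl}_{n+1}(\mathbb C)$, simple roots $\alpha_i$, fundamental weights $\varpi_i$, weight lattice $P$, Cartan matrix $a_{ii}=2$, $a_{ij}=-1$ if $|i-j|=1$, else $0$, form $(\alpha_i,\alpha_j)=a_{ij}$, $(\alpha_i,\varpi_j)=\delta_{ij}$. $U_q(\mathfrak g)$ is the $\mathbb K(q^{1/2})$-algebra generated by $E_i,F_i,K_\mu$ ($\mu\in P$) with $K_0=1$, $K_\mu K_\lambda=K_{\mu+\lambda}$, $K_\mu E_i=q^{(\alpha_i,\mu)}E_iK_\mu$, $K_\mu F_i=q^{-(\alpha_i,\mu)}F_iK_\mu$, $E_iF_j-F_jE_i=\delta_{ij}\frac{K_i-K_i^{-1}}{q-q^{-1}}$ ($K_i=K_{\alpha_i}$),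 and the quantum Serre relations. $[a,b]_c=ab-cba$. Fix $r$ with $2\le r\le\lceil n/2\rceil-1$, $X=\{r+1,\dots,n-r\}$, $\tau(i)=n-i+1$ (on weights $\varpi_i\mapsto\varpi_{\tau(i)}$). $E_X^+=[E_{r+1},[\dots,[E_{n-r-1},E_{n-r}]_{q^{-1}}\dots]_{q^{-1}}]_{q^{-1}}$, $E_X^-=[E_{n-r},[\dots,[E_{r+2},E_{r+1}]_{q^{-1}}\dots]_{q^{-1}}]_{q^{-1}}$, $F_X^+=[F_{r+1},[\dots,[F_{n-r-1},F_{n-r}]_q\dots]_q]_q$, $F_X^-=[F_{n-r},[\dots,[F_{r+2},F_{r+1}]_q\dots]_q]_q$ (equal to $E_{r+1}$, $F_{r+1}$ if $|X|=1$); $K_X=K_{r+1}\cdots K_{n-r}$; $L_i=K_iK_{\tau(i)}^{-1}$. $\mathcal M_X$ is generated by $E_j,F_j,K_j^{\pm1}$ ($j\in X$); $U^0_\Theta$ by the $K_\mu$ with $-w_X\tau(\mu)=\mu$ ($w_X$ longest element of the parabolic Weyl subgroup for $X$). Parameters $c_i\in\mathbb K(q^{1/2})^\times$ ($i\in I\setminus X$) with $c_i=c_{\tau(i)}$ for $i\notin X\cup\{r,\tau(r)\}$. $B_i=F_i-c_iE_{\tau(i)}K_i^{-1}$ for $i\in I\setminus(X\cup\{r,\tau(r)\})$, $B_r=F_r-c_r[E_X^+,E_{\tau(r)}]_{q^{-1}}K_r^{-1}$, $B_{\tau(r)}=F_{\tau(r)}-c_{\tau(r)}[E_X^-,E_r]_{q^{-1}}K_{\tau(r)}^{-1}$;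 $B_{\mathbf c}$ is the subalgebra generated by $\mathcal M_X$, $U^0_\Theta$ and the $B_i$. *)

theory Defs
  imports "HOL-Computational_Algebra.Polynomial" "HOL-Computational_Algebra.Fraction_Field" "HOL-Library.Function_Algebras"
begin

text \<open>Coefficient field K(q^(1/2)) = fraction field of K[t], with t = q^(1/2), q = t^2.\<close>

definition qhalf :: "'k::field_char_0 poly fract" where
  "qhalf = Fract [:0, 1:] 1"

definition qq :: "'k::field_char_0 poly fract" where
  "qq = qhalf ^ 2"

text \<open>Index set I = {1..n}; Cartan matrix of type A_n; simple roots written in the
  basis of fundamental weights (a weight mu = sum_j mu j * varpi_j, with mu j = 0 for j outside I),
  so that (alpha_i, mu) = mu i.\<close>

definition cartan :: "nat \<Rightarrow> nat \<Rightarrow> int" where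
  "cartan i j = (if i = j then 2 else if \<bar>int i - int j\<bar> = 1 then -1 else 0)"

definition wts :: "nat \<Rightarrow> (nat \<Rightarrow> int) set" where
  "wts n = {mu. \<forall>j. (j < 1 \<or> n < j) \<longrightarrow> mu j = 0}"

definition sroot :: "nat \<Rightarrow> nat \<Rightarrow> (nat \<Rightarrow> int)" where
  "sroot n i = (\<lambda>j. if 1 \<le> j \<and> j \<le> n then cartan i j else 0)"

definition tau :: "nat \<Rightarrow> nat \<Rightarrow> nat" where
  "tau n i = n - i + 1"

definition qcomm :: "('s \<Rightarrow> 'a::ring_1) \<Rightarrow> 's \<Rightarrow> 'a \<Rightarrow> 'a \<Rightarrow> 'a" where
  "qcomm phi c a b = a * b - phi c * (b * a)"

text \<open>The defining relations of U_q(sl_(n+1)) over K(q^(1/2)), realised in a unital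
  associative K(q^(1/2))-algebra 'a (scalars via the central unital ring map phi),
  by elements E i, F i (i in I) and K mu (mu in P).\<close>

definition uq_rels ::
  "nat \<Rightarrow> ('k::field_char_0 poly fract \<Rightarrow> 'a::ring_1) \<Rightarrow> (nat \<Rightarrow> 'a) \<Rightarrow> (nat \<Rightarrow> 'a)
     \<Rightarrow> ((nat \<Rightarrow> int) \<Rightarrow> 'a) \<Rightarrow> bool" where
  "uq_rels n phi E F K \<longleftrightarrow>
     (\<forall>x y. phi (x + y) = phi x + phi y) \<and> (\<forall>x y. phi (x * y) = phi x * phi y) \<and> phi 1 = 1 \<and>
     (\<forall>x a. phi x * a = a * phi x) \<and>
     K 0 = 1 \<and>
     (\<forall>mu\<in>wts n. \<forall>la\<in>wts n. K mu * K la = K (mu + la)) \<and>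
     (\<forall>mu\<in>wts n. \<forall>i\<in>{1..n}. K mu * E i = phi (qq powi (mu i)) * E i * K mu) \<and>
     (\<forall>mu\<in>wts n. \<forall>i\<in>{1..n}. K mu * F i = phi (qq powi (- mu i)) * F i * K mu) \<and>
     (\<forall>i\<in>{1..n}. \<forall>j\<in>{1..n}. E i * F j - F j * E i =
        (if i = j then phi (1 / (qq - 1 / qq)) * (K (sroot n i) - K (- sroot n i)) else 0)) \<and>
     (\<forall>i\<in>{1..n}. \<forall>j\<in>{1..n}. \<bar>int i - int j\<bar> = 1 \<longrightarrow>
        E i * E i * E j - phi (qq + 1 / qq) * (E i * E j * E i) + E j * E i * E i = 0 \<and>
        F i * F i * F j - phi (qq + 1 / qq) * (F i * F j * F i) + F j * F i * F i = 0) \<and>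
     (\<forall>i\<in>{1..n}. \<forall>j\<in>{1..n}. \<bar>int i - int j\<bar> > 1 \<longrightarrow>
        E i * E j = E j * E i \<and> F i * F j = F j * F i)"

definition EXp :: "nat \<Rightarrow> nat \<Rightarrow> ('k::field_char_0 poly fract \<Rightarrow> 'a::ring_1) \<Rightarrow> (nat \<Rightarrow> 'a) \<Rightarrow> 'a" where
  "EXp n r phi E = foldr (\<lambda>j acc. qcomm phi (1 / qq) (E j) acc) [r+1..<n-r] (E (n - r))"

definition EXm :: "nat \<Rightarrow> nat \<Rightarrow> ('k::field_char_0 poly fract \<Rightarrow> 'a::ring_1) \<Rightarrow> (nat \<Rightarrow> 'a) \<Rightarrow> 'a" where
  "EXm n r phi E = foldr (\<lambda>j acc. qcomm phi (1 / qq) (E j) acc) (rev [r+2..<n-r+1]) (E (r + 1))"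

definition FXp :: "nat \<Rightarrow> nat \<Rightarrow> ('k::field_char_0 poly fract \<Rightarrow> 'a::ring_1) \<Rightarrow> (nat \<Rightarrow> 'a) \<Rightarrow> 'a" where
  "FXp n r phi F = foldr (\<lambda>j acc. qcomm phi qq (F j) acc) [r+1..<n-r] (F (n - r))"

definition FXm :: "nat \<Rightarrow> nat \<Rightarrow> ('k::field_char_0 poly fract \<Rightarrow> 'a::ring_1) \<Rightarrow> (nat \<Rightarrow> 'a) \<Rightarrow> 'a" where
  "FXm n r phi F = foldr (\<lambda>j acc. qcomm phi qq (F j) acc) (rev [r+2..<n-r+1]) (F (r + 1))"

definition KX :: "nat \<Rightarrow> nat \<Rightarrow> ((nat \<Rightarrow> int) \<Rightarrow> 'a) \<Rightarrow> 'a" where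
  "KX n r K = K (\<Sum>j\<in>{r+1..n-r}. sroot n j)"

definition Lw :: "nat \<Rightarrow> ((nat \<Rightarrow> int) \<Rightarrow> 'a) \<Rightarrow> nat \<Rightarrow> 'a" where
  "Lw n K i = K (sroot n i - sroot n (tau n i))"

definition Bgen ::
  "nat \<Rightarrow> nat \<Rightarrow> ('k::field_char_0 poly fract \<Rightarrow> 'a::ring_1) \<Rightarrow> (nat \<Rightarrow> 'a) \<Rightarrow> (nat \<Rightarrow> 'a)
     \<Rightarrow> ((nat \<Rightarrow> int) \<Rightarrow> 'a) \<Rightarrow> (nat \<Rightarrow> 'k poly fract) \<Rightarrow> nat \<Rightarrow> 'a" where
  "Bgen n r phi E F K c i =
     (if i = r then F r - phi (c r) * qcomm phi (1 / qq) (EXp n r phi E) (E (tau n r)) * K (- sroot n r)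
      else if i = tau n r then
        F (tau n r) - phi (c (tau n r)) * qcomm phi (1 / qq) (EXm n r phi E) (E r) * K (- sroot n (tau n r))
      else F i - phi (c i) * E (tau n i) * K (- sroot n i))"

end

theory Submission imports Defs begin

text \<open>
  Write \<open>S = [B', [B, Y]_q]_q\<close> with \<open>B' = B_(r-1)\<close>, \<open>B = B_r\<close>, \<open>Y = F_X^+\<close>, and
  \<open>Z = -(1 - q^-2) X L\<close> with \<open>X = E_X^-\<close>, \<open>L = L_r\<close>. The identity
  \<open>Z S = q^-1 S Z + (1 - q^-2) [B', B]_q L K_X\<close> follows by formal algebra, in any ring with
  central scalars, from ten commutation relations: the torus elements \<open>L, K_X, K_X^-1\<close> act on
  each of \<open>X, Y, B', B\<close> by a power of \<open>q\<close> read off from the Cartan matrix; \<open>X\<close> commutes with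
  \<open>B'\<close> and with \<open>B\<close> (for \<open>B\<close> because \<open>X\<close> \<open>q\<close>-commutes with the root vector
  \<open>[E_X^+, E_\<tau>(r)]\<close> by the Serre relations, and \<open>K_r^-1\<close> undoes the factor \<open>q\<close>); and
  \<open>[X, Y] = (K_X - K_X^-1) / (q - q^-1)\<close>, by induction along the string \<open>X\<close>.

  The second identity is the first one for the generators twisted by the diagram automorphism
  \<open>\<tau>\<close>, which preserves the defining relations, exchanges \<open>E_X^+\<close> and \<open>E_X^-\<close>, and sends
  \<open>B_i\<close> to \<open>B_\<tau>(i)\<close> once the parameters are twisted too. Neither identity uses any hypothesis
  on the parameters \<open>c_i\<close>.
\<close>

section \<open>The parameter \<open>q\<close>\<close>

lemma qq_eq_Fract: "(qq::'k::field_char_0 poly fract) = Fract ([:0, 1:] ^ 2) 1"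
  unfolding qq_def qhalf_def by (simp add: power2_eq_square)

lemma qq_nonzero: "(qq::'k::field_char_0 poly fract) \<noteq> 0"
  unfolding qq_eq_Fract by (simp add: Zero_fract_def eq_fract)

lemma qq_square_neq_const: "(qq::'k::field_char_0 poly fract) * qq \<noteq> Fract [:a:] 1"
proof
  assume "(qq::'k poly fract) * qq = Fract [:a:] 1"
  hence "[:0, 1:] ^ 4 = [:a:]"
    unfolding qq_eq_Fract by (simp add: eq_fract power_add[symmetric])
  hence "degree ([:0, 1:] ^ 4 :: 'k poly) = 0" by simp
  thus False by (simp add: degree_power_eq)
qed

lemma qq_plus_inverse_nonzero: "(qq::'k::field_char_0 poly fract) + 1 / qq \<noteq> 0"
proof
  assume "(qq::'k poly fract) + 1 / qq = 0"
  moreover have "qq * qq + 1 = qq * (qq + 1 / (qq::'k poly fract))"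
    using qq_nonzero by (simp add: distrib_left)
  ultimately have "(qq::'k poly fract) * qq = - 1"
    by (simp add: eq_neg_iff_add_eq_0)
  thus False
    using qq_square_neq_const[where 'k='k and a="- 1"] by (simp add: One_fract_def one_pCons)
qed

lemma qq_minus_inverse_nonzero: "(qq::'k::field_char_0 poly fract) - 1 / qq \<noteq> 0"
proof
  assume "(qq::'k poly fract) - 1 / qq = 0"
  moreover have "qq * qq - 1 = qq * (qq - 1 / (qq::'k poly fract))"
    using qq_nonzero by (simp add: right_diff_distrib)
  ultimately have "(qq::'k poly fract) * qq = 1"
    by simp
  thus False
    using qq_square_neq_const[where 'k='k and a=1] by (simp add: One_fract_def one_pCons)
qed

section \<open>Central scalars and iterated \<open>q\<close>-commutators\<close>

definition qcomm_chain :: "('s \<Rightarrow> 'a::ring_1) \<Rightarrow> 's \<Rightarrow> (nat \<Rightarrow> 'a) \<Rightarrow> nat \<Rightarrow> nat \<Rightarrow> 'a" where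
  "qcomm_chain phi c G i j = foldr (\<lambda>k acc. qcomm phi c (G k) acc) [i..<j] (G j)"

definition qcomm_chain_desc :: "('s \<Rightarrow> 'a::ring_1) \<Rightarrow> 's \<Rightarrow> (nat \<Rightarrow> 'a) \<Rightarrow> nat \<Rightarrow> nat \<Rightarrow> 'a" where
  "qcomm_chain_desc phi c G i j = foldr (\<lambda>k acc. qcomm phi c (G k) acc) (rev [Suc i..<Suc j]) (G i)"

lemma qcomm_chain_same [simp]: "qcomm_chain phi c G j j = G j"
  by (simp add: qcomm_chain_def)

lemma qcomm_chain_Cons:
  "i < j \<Longrightarrow> qcomm_chain phi c G i j = qcomm phi c (G i) (qcomm_chain phi c G (Suc i) j)"
  by (simp add: qcomm_chain_def upt_conv_Cons)

lemma qcomm_chain_desc_same [simp]: "qcomm_chain_desc phi c G i i = G i"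
  by (simp add: qcomm_chain_desc_def)

lemma qcomm_chain_desc_Suc:
  "i \<le> j \<Longrightarrow> qcomm_chain_desc phi c G i (Suc j) = qcomm phi c (G (Suc j)) (qcomm_chain_desc phi c G i j)"
  by (simp add: qcomm_chain_desc_def)

locale central_scalars =
  fixes phi :: "'s::field \<Rightarrow> 'a::ring_1"
  assumes phi_add: "phi (x + y) = phi x + phi y"
    and phi_mult: "phi (x * y) = phi x * phi y"
    and phi_one [simp]: "phi 1 = 1"
    and phi_central: "phi x * a = a * phi x"
begin

lemma phi_zero [simp]: "phi 0 = 0"
  using phi_add[of 0 0] by simp

lemma phi_minus: "phi (- x) = - phi x"
  using phi_add[of x "- x"] by (simp add: add_eq_0_iff2)

lemma phi_diff: "phi (x - y) = phi x - phi y"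
  using phi_add[of x "- y"] by (simp add: phi_minus)

lemma mult_phi_left_commute: "a * (phi s * b) = phi s * (a * b)"
  by (metis phi_central mult.assoc)

lemma phi_left_commute: "phi s * (phi t * b) = phi t * (phi s * b)"
  by (rule mult_phi_left_commute)

lemma phi_commute: "phi s * phi t = phi t * phi s"
  by (rule phi_central)

lemma phi_mult_phi: "phi s * (phi t * b) = phi (s * t) * b"
  by (simp add: phi_mult mult.assoc)

lemma phi_inverse_cancel:
  assumes "s \<noteq> 0"
  shows "phi s * (phi (1 / s) * b) = b" and "phi (1 / s) * (phi s * b) = b"
  using assms by (simp_all add: phi_mult_phi)

lemma phi_cancel: "s \<noteq> 0 \<Longrightarrow> phi s * d = 0 \<Longrightarrow> d = 0"
  by (metis phi_inverse_cancel(2) mult_zero_right)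

lemma qcomm_weight:
  assumes "x * a = phi s * a * x" "x * b = phi t * b * x"
  shows "x * qcomm phi c a b = phi (s * t) * qcomm phi c a b * x"
proof -
  have "x * qcomm phi c a b = x * a * b - phi c * (x * b * a)"
    by (simp add: qcomm_def algebra_simps mult_phi_left_commute[of x])
  also have "\<dots> = phi s * a * (phi t * b * x) - phi c * (phi t * b * (phi s * a * x))"
    using assms by (simp add: mult.assoc)
  also have "\<dots> = phi (s * t) * qcomm phi c a b * x"
    by (simp add: qcomm_def algebra_simps mult_phi_left_commute[of a] mult_phi_left_commute[of b]
        phi_mult_phi mult.commute)
  finally show ?thesis .
qed

lemma qcomm_commute:
  assumes "x * a = a * x" "x * b = b * x"
  shows "x * qcomm phi c a b = qcomm phi c a b * x"
  using qcomm_weight[of x a 1 b 1 c] assms by simp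

lemma qcomm_qcomm_assoc:
  assumes "a * d = d * a"
  shows "qcomm phi y a (qcomm phi x b d) = qcomm phi x (qcomm phi y a b) d"
proof -
  have "qcomm phi y a (qcomm phi x b d)
      = a * b * d - phi x * (a * d * b) - phi y * (b * d * a) + phi y * (phi x * (d * b * a))"
    by (simp add: qcomm_def algebra_simps mult_phi_left_commute[of a] mult_phi_left_commute[of b]
        mult_phi_left_commute[of d] phi_central[of _ a] phi_central[of _ b] phi_central[of _ d])
  also have "\<dots> = a * b * d - phi x * (d * a * b) - phi y * (b * a * d) + phi y * (phi x * (d * b * a))"
    using assms by (simp add: mult.assoc[symmetric]) (simp add: mult.assoc)
  also have "\<dots> = qcomm phi x (qcomm phi y a b) d"
    by (simp add: qcomm_def algebra_simps mult_phi_left_commute[of a] mult_phi_left_commute[of b]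
        mult_phi_left_commute[of d] phi_central[of _ a] phi_central[of _ b] phi_central[of _ d]
        phi_mult_phi mult.commute)
  finally show ?thesis .
qed

lemma qcomm_chain_weight:
  assumes "z \<noteq> 0" "\<forall>k\<in>{i..j}. x * G k = phi (z powi w k) * G k * x" "i \<le> j"
  shows "x * qcomm_chain phi c G i j = phi (z powi (\<Sum>k=i..j. w k)) * qcomm_chain phi c G i j * x"
  using assms(2,3)
proof (induction "j - i" arbitrary: i)
  case 0
  thus ?case by simp
next
  case (Suc d)
  hence "i < j" by simp
  with Suc have "x * qcomm_chain phi c G i j
      = phi (z powi w i * z powi (\<Sum>k=Suc i..j. w k)) * qcomm_chain phi c G i j * x"
    by (simp add: qcomm_chain_Cons qcomm_weight)
  also have "z powi w i * z powi (\<Sum>k=Suc i..j. w k) = z powi (\<Sum>k=i..j. w k)"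
    using \<open>i < j\<close> assms(1) by (simp add: power_int_add sum.atLeast_Suc_atMost)
  finally show ?case .
qed

lemma qcomm_chain_desc_weight:
  assumes "z \<noteq> 0" "\<forall>k\<in>{i..j}. x * G k = phi (z powi w k) * G k * x" "i \<le> j"
  shows "x * qcomm_chain_desc phi c G i j
    = phi (z powi (\<Sum>k=i..j. w k)) * qcomm_chain_desc phi c G i j * x"
  using assms(2,3)
proof (induction j)
  case (Suc j)
  show ?case
  proof (cases "i = Suc j")
    case False
    with Suc have "x * qcomm_chain_desc phi c G i (Suc j)
        = phi (z powi w (Suc j) * z powi (\<Sum>k=i..j. w k)) * qcomm_chain_desc phi c G i (Suc j) * x"
      by (simp add: qcomm_chain_desc_Suc qcomm_weight)
    also have "z powi w (Suc j) * z powi (\<Sum>k=i..j. w k) = z powi (\<Sum>k=i..Suc j. w k)"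
      using False Suc.prems assms(1) by (simp add: power_int_add add.commute)
    finally show ?thesis .
  qed (use Suc.prems in simp)
qed simp

lemma qcomm_chain_commute:
  assumes "\<forall>k\<in>{i..j}. x * G k = G k * x" "i \<le> j"
  shows "x * qcomm_chain phi c G i j = qcomm_chain phi c G i j * x"
  using qcomm_chain_weight[of 1 i j x G "\<lambda>_. 0" c] assms by simp

lemma qcomm_chain_desc_commute:
  assumes "\<forall>k\<in>{i..j}. x * G k = G k * x" "i \<le> j"
  shows "x * qcomm_chain_desc phi c G i j = qcomm_chain_desc phi c G i j * x"
  using qcomm_chain_desc_weight[of 1 i j x G "\<lambda>_. 0" c] assms by simp

lemma qcomm_chain_snoc:
  assumes "\<forall>k\<in>{i..Suc j}. \<forall>l\<in>{i..Suc j}. k + 2 \<le> l \<longrightarrow> G k * G l = G l * G k" "i \<le> j"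
  shows "qcomm_chain phi c G i (Suc j) = qcomm phi c (qcomm_chain phi c G i j) (G (Suc j))"
  using assms
proof (induction "j - i" arbitrary: i)
  case 0
  thus ?case by (simp add: qcomm_chain_Cons)
next
  case (Suc d)
  hence "i < j" by simp
  have IH: "qcomm_chain phi c G (Suc i) (Suc j)
      = qcomm phi c (qcomm_chain phi c G (Suc i) j) (G (Suc j))"
    using Suc.hyps(2) Suc.prems(1) \<open>i < j\<close>
    by (intro Suc.hyps(1)) (simp_all, meson atLeastAtMost_iff le_SucI le_trans order_refl)
  have "G i * G (Suc j) = G (Suc j) * G i"
    using Suc.prems(1)[rule_format, of i "Suc j"] \<open>i < j\<close> by simp
  then show ?case
    using \<open>i < j\<close> by (simp add: qcomm_chain_Cons IH qcomm_qcomm_assoc)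
qed

lemma diff_smult_mult_weight:
  assumes "x * a = phi w * a * x" "x * b = phi w1 * b * x" "x * d = phi w2 * d * x" "w1 * w2 = w"
  shows "x * (a - phi s * b * d) = phi w * (a - phi s * b * d) * x"
proof -
  have "x * (a - phi s * b * d) = x * a - phi s * (x * b * d)"
    by (simp add: algebra_simps mult_phi_left_commute[of x])
  also have "\<dots> = phi w * a * x - phi s * (phi w1 * b * (phi w2 * d * x))"
    using assms(1-3) by (simp add: mult.assoc)
  also have "\<dots> = phi w * (a - phi s * b * d) * x"
    using assms(4) by (simp add: algebra_simps mult_phi_left_commute[of b] mult_phi_left_commute[of d]
        phi_mult_phi mult.commute)
  finally show ?thesis .
qed

lemma diff_smult_mult_commute:
  assumes "x * a = a * x" "x * b = b * x" "x * d = d * x"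
  shows "x * (a - phi s * b * d) = (a - phi s * b * d) * x"
  using diff_smult_mult_weight[of x a 1 b 1 d 1 s] assms by simp

end

section \<open>Identities for a generic parameter \<open>q\<close>\<close>

definition qserre :: "('s::field \<Rightarrow> 'a::ring_1) \<Rightarrow> 's \<Rightarrow> 'a \<Rightarrow> 'a \<Rightarrow> 'a" where
  "qserre phi q x w = x * x * w - phi (q + 1 / q) * (x * w * x) + w * x * x"

locale qscalars = central_scalars phi for phi :: "'s::field \<Rightarrow> 'a::ring_1" +
  fixes q :: 's
  assumes q_nonzero: "q \<noteq> 0"
    and q_plus_inverse_nonzero: "q + 1 / q \<noteq> 0"
    and q_minus_inverse_nonzero: "q - 1 / q \<noteq> 0"
begin

lemmas q_cancel = phi_inverse_cancel[OF q_nonzero]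

lemma q_times_inverse: "phi q * phi (1 / q) = 1" "phi (1 / q) * phi q = 1"
  using q_cancel[of 1] by simp_all

lemma qserre_eq_qcomm:
  "x * qcomm phi (1 / q) x w - phi q * qcomm phi (1 / q) x w * x = qserre phi q x w"
  by (simp add: qserre_def qcomm_def phi_add algebra_simps mult_phi_left_commute[of x]
      mult_phi_left_commute[of w] phi_mult_phi q_nonzero)

lemma qserre_qcomm_right:
  assumes "b * x = x * b"
  shows "qserre phi q x (qcomm phi c a b) = qserre phi q x a * b - phi c * (b * qserre phi q x a)"
proof -
  let ?p = "phi (q + 1 / q)"
  have "qserre phi q x (qcomm phi c a b) = x*x*a*b - phi c * (x*x*b*a) - ?p * (x*a*b*x)
      + ?p * (phi c * (x*b*a*x)) + a*b*x*x - phi c * (b*a*x*x)"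
    by (simp add: qserre_def qcomm_def algebra_simps mult_phi_left_commute[of x]
        mult_phi_left_commute[of a] mult_phi_left_commute[of b])
  also have "\<dots> = x*x*a*b - phi c * (b*x*x*a) - ?p * (x*a*x*b) + ?p * (phi c * (b*x*a*x))
      + a*x*x*b - phi c * (b*a*x*x)"
    using assms by (simp add: mult.assoc)
  also have "\<dots> = qserre phi q x a * b - phi c * (b * qserre phi q x a)"
    by (simp add: qserre_def algebra_simps mult_phi_left_commute[of x] mult_phi_left_commute[of a]
        mult_phi_left_commute[of b] phi_mult_phi mult.commute)
  finally show ?thesis .
qed

text \<open>The commutator below is a combination of the two Serre relations and of \<open>[x, z]\<close>.\<close>

lemma commute_qcomm_qcomm_of_qserre:
  assumes xz: "x * z = z * x" and S1: "qserre phi q y x = 0" and S2: "qserre phi q y z = 0"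
  shows "y * qcomm phi (1 / q) x (qcomm phi (1 / q) y z)
    = qcomm phi (1 / q) x (qcomm phi (1 / q) y z) * y"
proof -
  let ?Q = "phi q" and ?Qi = "phi (1 / q)" and ?C = "x * z - z * x"
  let ?W = "qcomm phi (1 / q) x (qcomm phi (1 / q) y z)"
  have "phi (q + 1 / q) * (y * ?W - ?W * y)
     = - (qserre phi q y x * z) + ?Qi * ?Qi * (z * qserre phi q y x)
       + x * qserre phi q y z - ?Qi * ?Qi * (qserre phi q y z * x)
       + ?Qi * ?Qi * (?C * y * y) - ?Qi * (?Q + ?Qi) * (y * ?C * y) + y * y * ?C"
    by (simp add: qserre_def qcomm_def phi_add algebra_simps mult_phi_left_commute[of x]
        mult_phi_left_commute[of y] mult_phi_left_commute[of z] phi_central[of _ x, symmetric]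
        phi_central[of _ y, symmetric] phi_central[of _ z, symmetric] q_cancel q_times_inverse)
  also have "\<dots> = 0"
    using S1 S2 xz by simp
  finally have "y * ?W - ?W * y = 0"
    by (rule phi_cancel[OF q_plus_inverse_nonzero])
  thus ?thesis by simp
qed

abbreviation inv_qdiff :: 'a where
  "inv_qdiff \<equiv> phi (1 / (q - 1 / q))"

lemma inv_qdiff_shift: "phi q * inv_qdiff - inv_qdiff * phi (1 / q) = 1"
proof -
  define d where "d = 1 / (q - 1 / q)"
  have "q * d - d * (1 / q) = (q - 1 / q) * d"
    by (simp add: algebra_simps)
  also have "\<dots> = 1"
    using q_minus_inverse_nonzero by (simp add: d_def)
  finally show ?thesis
    by (metis d_def phi_diff phi_mult phi_one)
qed

lemma inv_qdiff_square: "inv_qdiff - phi q * (phi q * inv_qdiff) = - phi q"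
proof -
  define d where "d = 1 / (q - 1 / q)"
  have "d - q * (q * d) = - q * ((q - 1 / q) * d)"
    using q_nonzero by (simp add: algebra_simps)
  also have "\<dots> = - q"
    using q_minus_inverse_nonzero by (simp add: d_def)
  finally show ?thesis
    by (metis d_def phi_diff phi_mult phi_minus)
qed

lemma q_cancel_middle:
  "phi q * (phi s * (phi (1 / q) * b)) = phi s * b"
  "phi (1 / q) * (phi s * (phi q * b)) = phi s * b"
  by (metis q_cancel phi_left_commute)+

lemma commutator_qcomm_of_commutator:
  assumes XB: "X * B = B * X" and XY: "X * Y - Y * X = inv_qdiff * (K - K')"
    and KB: "K * B = phi q * B * K" and K'B: "K' * B = phi (1 / q) * B * K'"
  shows "X * qcomm phi q B Y - qcomm phi q B Y * X = - phi q * (B * K)"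
proof -
  have XB': "\<And>w. X * (B * w) = B * (X * w)"
    using XB by (metis mult.assoc)
  have KB': "\<And>w. K * (B * w) = phi q * (B * (K * w))"
    and K'B': "\<And>w. K' * (B * w) = phi (1 / q) * (B * (K' * w))"
    using KB K'B by (simp_all add: mult.assoc[symmetric])
  have "X * qcomm phi q B Y - qcomm phi q B Y * X
      = B * (X * Y - Y * X) - phi q * ((X * Y - Y * X) * B)"
    by (simp add: qcomm_def algebra_simps mult_phi_left_commute[of X] mult_phi_left_commute[of B]
        XB XB')
  also have "\<dots> = (inv_qdiff - phi q * (phi q * inv_qdiff)) * (B * K)"
    unfolding XY
    by (simp add: algebra_simps KB K'B KB' K'B' mult_phi_left_commute[of B]
        mult_phi_left_commute[of K] mult_phi_left_commute[of K'] phi_left_commute phi_commute q_cancel)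
  finally show ?thesis
    by (simp add: inv_qdiff_square)
qed

lemma commutator_qcomm_of_commutator':
  assumes Af: "A * f = f * A" and AB: "A * B - B * A = inv_qdiff * (K - K')"
    and Kf: "K * f = phi q * f * K" and K'f: "K' * f = phi (1 / q) * f * K'"
  shows "A * qcomm phi q B f - qcomm phi q B f * A = f * K'"
proof -
  have "A * qcomm phi q B f - qcomm phi q B f * A
      = A * B * f - phi q * ((A * f) * B) - B * f * A + phi q * (f * B * A)"
    by (simp add: qcomm_def algebra_simps mult_phi_left_commute[of A])
  also have "\<dots> = (A * B - B * A) * f - phi q * (f * (A * B - B * A))"
    by (simp add: Af algebra_simps)
  also have "\<dots> = (phi q * inv_qdiff - inv_qdiff * phi (1 / q)) * (f * K')"
    unfolding AB
    by (simp add: algebra_simps Kf K'f mult_phi_left_commute[of f] mult_phi_left_commute[of K]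
        mult_phi_left_commute[of K'] phi_left_commute phi_commute)
  finally show ?thesis
    by (simp add: inv_qdiff_shift)
qed

text \<open>Inductive step for \<open>[E, F] = (K - K\<inverse>) / (q - q\<inverse>)\<close> along a string of simple
  roots: \<open>A, B\<close> are the strings so far, \<open>e, f\<close> the next letters.\<close>

lemma commutator_qcomm_qcomm:
  assumes AB: "A * B - B * A = inv_qdiff * (Ka - Ka')"
    and ef: "e * f - f * e = inv_qdiff * (Ke - Ke')"
    and Af: "A * f = f * A" and eB: "e * B = B * e"
    and Ka_f: "Ka * f = phi q * f * Ka" and Ka'_f: "Ka' * f = phi (1 / q) * f * Ka'"
    and Ka'_e: "Ka' * e = phi q * e * Ka'"
    and Ke_A: "Ke * A = phi (1 / q) * A * Ke" and Ke_B: "Ke * B = phi q * B * Ke"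
    and Ke'_B: "Ke' * B = phi (1 / q) * B * Ke'"
    and Ke_Ka': "Ke * Ka' = Ka' * Ke" and Ke'_Ka': "Ke' * Ka' = Ka' * Ke'"
  shows "qcomm phi (1 / q) e A * qcomm phi q B f - qcomm phi q B f * qcomm phi (1 / q) e A
         = inv_qdiff * (Ka * Ke - Ka' * Ke')"
proof -
  let ?Q = "phi q" and ?Qi = "phi (1 / q)"
  let ?X = "qcomm phi (1 / q) e A" and ?Y = "qcomm phi q B f"
  have "?X * ?Y - ?Y * ?X
      = e * (A * ?Y - ?Y * A) + (e * ?Y - ?Y * e) * A
        - ?Qi * (A * (e * ?Y - ?Y * e) + (A * ?Y - ?Y * A) * e)"
    by (simp add: qcomm_def[of phi "1 / q"] algebra_simps mult_phi_left_commute[of e]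
        mult_phi_left_commute[of A] mult_phi_left_commute[of ?Y])
  also have "\<dots> = e * (f * Ka') + (- ?Q * (B * Ke)) * A - ?Qi * (A * (- ?Q * (B * Ke)) + (f * Ka') * e)"
    unfolding commutator_qcomm_of_commutator'[OF Af AB Ka_f Ka'_f]
      commutator_qcomm_of_commutator[OF eB ef Ke_B Ke'_B] ..
  also have "\<dots> = (e * f - f * e) * Ka' + (A * B - B * A) * Ke"
  proof -
    have a1: "(- ?Q * (B * Ke)) * A = - (B * A * Ke)"
      by (simp add: mult.assoc Ke_A mult_phi_left_commute[of B] phi_left_commute q_cancel)
    have a2: "(f * Ka') * e = ?Q * (f * e * Ka')"
      by (simp add: mult.assoc Ka'_e mult_phi_left_commute[of f])
    show ?thesis
      unfolding a1 a2
      by (simp add: algebra_simps mult_phi_left_commute[of A] mult_phi_left_commute[of B]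
          mult_phi_left_commute[of f] phi_left_commute q_cancel)
  qed
  also have "\<dots> = inv_qdiff * (Ka * Ke - Ka' * Ke')"
    unfolding AB ef by (simp add: algebra_simps Ke_Ka' Ke'_Ka')
  finally show ?thesis .
qed

lemma inner_qcomm_commutation:
  assumes XB: "X * B = B * X" and LB_weight: "L * B = phi (q powi (- 2)) * B * L"
    and LY: "L * Y = Y * L" and XY: "X * Y - Y * X = inv_qdiff * (K - K')"
    and KB: "K * B = phi q * B * K" and K'B: "K' * B = phi (1 / q) * B * K'"
    and LK: "L * K = K * L"
  shows "- (phi a * X * L) * qcomm phi q B Y
    = phi (1 / q) * (phi (1 / q) * (qcomm phi q B Y * - (phi a * X * L)))
      + phi a * (phi (1 / q) * (B * (L * K)))"
proof -
  let ?Q = "phi q" and ?Qi = "phi (1 / q)" and ?T = "qcomm phi q B Y"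
  have "q powi (- 2) = 1 / q * (1 / q)"
    by (simp add: power_int_minus power2_eq_square divide_inverse)
  hence "phi (q powi (- 2)) = ?Qi * ?Qi"
    by (simp only: phi_mult)
  hence LB: "L * B = ?Qi * (?Qi * (B * L))"
    using LB_weight by (simp add: mult.assoc)
  have LB2: "\<And>w. L * (B * w) = ?Qi * (?Qi * (B * (L * w)))"
    and LY2: "\<And>w. L * (Y * w) = Y * (L * w)"
    using LB LY by (metis mult.assoc)+
  have LT: "L * ?T = ?Qi * (?Qi * (?T * L))"
    by (simp add: qcomm_def algebra_simps LB LY LB2 LY2 mult_phi_left_commute[of L]
        mult_phi_left_commute[of B] mult_phi_left_commute[of Y] phi_left_commute phi_commute)
  have "- (phi a * X * L) * ?T = - (phi a * (?Qi * (?Qi * ((X * ?T) * L))))"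
    by (simp add: mult.assoc LT mult_phi_left_commute[of X] phi_left_commute)
  also have "X * ?T = ?T * X - ?Q * (B * K)"
    using commutator_qcomm_of_commutator[OF XB XY KB K'B] by (simp add: algebra_simps)
  finally show ?thesis
    by (simp add: algebra_simps mult_phi_left_commute[of B] mult_phi_left_commute[of ?T]
        mult_phi_left_commute[of X] LK phi_left_commute phi_commute q_cancel)
qed

lemma nested_qcomm_commutation:
  assumes XB': "X * B' = B' * X" and LB': "L * B' = phi q * B' * L" and KB': "K * B' = B' * K"
    and XB: "X * B = B * X" and LB: "L * B = phi (q powi (- 2)) * B * L"
    and LY: "L * Y = Y * L" and XY: "X * Y - Y * X = inv_qdiff * (K - K')"
    and KB: "K * B = phi q * B * K" and K'B: "K' * B = phi (1 / q) * B * K'"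
    and LK: "L * K = K * L"
  shows "- (phi a * X * L) * qcomm phi q B' (qcomm phi q B Y)
     = phi (1 / q) * qcomm phi q B' (qcomm phi q B Y) * - (phi a * X * L)
       + phi a * qcomm phi q B' B * L * K"
proof -
  let ?Q = "phi q" and ?Qi = "phi (1 / q)"
  let ?T = "qcomm phi q B Y" and ?Z = "- (phi a * X * L)"
  note ZT = inner_qcomm_commutation[OF XB LB LY XY KB K'B LK, of a]
  have XB'2: "\<And>w. X * (B' * w) = B' * (X * w)"
    and LB'2: "\<And>w. L * (B' * w) = ?Q * (B' * (L * w))"
    using XB' LB' by (simp_all add: mult.assoc[symmetric])
  have ZB'2: "\<And>w. ?Z * (B' * w) = ?Q * (B' * (?Z * w))"
    by (simp add: algebra_simps XB' XB'2 LB' LB'2 mult_phi_left_commute[of X]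
        mult_phi_left_commute[of B'] phi_left_commute)
  have ZT2: "\<And>w. ?Z * (?T * w)
      = ?Qi * (?Qi * (?T * (?Z * w))) + phi a * (?Qi * (B * (L * (K * w))))"
    unfolding mult.assoc[of ?Z ?T, symmetric] ZT by (simp add: algebra_simps)
  have ZB': "?Z * B' = ?Q * (B' * ?Z)"
    using ZB'2[of 1] by simp
  have LKB': "L * (K * B') = ?Q * (B' * (L * K))"
    by (simp add: KB' LB'2)
  have "?Z * qcomm phi q B' ?T = ?Z * (B' * ?T) - ?Q * (?Z * (?T * B'))"
    unfolding qcomm_def[of phi q B'] right_diff_distrib mult_phi_left_commute[of ?Z] ..
  also have "\<dots> = ?Q * (B' * (?Qi * (?Qi * (?T * ?Z)) + phi a * (?Qi * (B * (L * K)))))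
      - ?Q * (?Qi * (?Qi * (?T * (?Q * (B' * ?Z)))) + phi a * (?Qi * (B * (?Q * (B' * (L * K))))))"
    unfolding ZB'2 ZT ZT2 ZB' LKB' ..
  also have "\<dots> = ?Qi * qcomm phi q B' ?T * ?Z + phi a * qcomm phi q B' B * L * K"
    by (simp add: qcomm_def algebra_simps mult_phi_left_commute[of B'] mult_phi_left_commute[of B]
        mult_phi_left_commute[of Y] mult_phi_left_commute[of X] mult_phi_left_commute[of L]
        phi_left_commute q_cancel q_cancel_middle)
  finally show ?thesis .
qed

end

section \<open>Weights of type \<open>A\<close>\<close>

lemma cartan_commute: "cartan i j = cartan j i"
  unfolding cartan_def by (simp add: abs_minus_commute)

lemma sum_cartan:
  "(\<Sum>k=a..b. cartan m k) = (if a \<le> m \<and> m \<le> b then 2 else 0)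
     - (if a \<le> Suc m \<and> Suc m \<le> b then 1 else 0) - (if 0 < m \<and> a \<le> m - 1 \<and> m - 1 \<le> b then 1 else 0)"
proof -
  have "cartan m k = (if k = m then 2 else 0) - (if k = Suc m then 1 else 0)
      - (if 0 < m then (if k = m - 1 then 1 else 0) else 0)" for k
    unfolding cartan_def by auto
  hence "(\<Sum>k=a..b. cartan m k)
      = (\<Sum>k=a..b. if k = m then 2 else 0) - (\<Sum>k=a..b. if k = Suc m then 1 else 0)
        - (if 0 < m then (\<Sum>k=a..b. if k = m - 1 then 1 else 0) else 0)"
    by (simp add: sum_subtractf)
  thus ?thesis by simp
qed

lemma sum_cartan_segment:
  assumes "a \<le> b"
  shows "(\<Sum>k=a..Suc b. \<Sum>j=a..b. cartan j k) = 1"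
proof -
  have "(\<Sum>k=a..Suc b. \<Sum>j=a..b. cartan j k) = (\<Sum>j=a..b. \<Sum>k=a..Suc b. cartan j k)"
    by (rule sum.swap)
  also have "\<dots> = (\<Sum>j=a..b. if j = a then 1 else 0)"
    by (rule sum.cong) (auto simp: sum_cartan simp del: sum.cl_ivl_Suc)
  also have "\<dots> = 1"
    using assms by simp
  finally show ?thesis .
qed

lemma sroot_apply: "sroot n m k = (if 1 \<le> k \<and> k \<le> n then cartan m k else 0)"
  by (simp add: sroot_def)

lemma sum_sroot: "1 \<le> a \<Longrightarrow> b \<le> n \<Longrightarrow> (\<Sum>k=a..b. sroot n m k) = (\<Sum>k=a..b. cartan m k)"
  by (rule sum.cong) (auto simp: sroot_apply)

lemma sum_sroots_apply: "1 \<le> l \<Longrightarrow> l \<le> n \<Longrightarrow> (\<Sum>k\<in>A. sroot n k) l = (\<Sum>k\<in>A. cartan l k)"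
proof (induction A rule: infinite_finite_induct)
  case (insert x A)
  thus ?case by (simp add: sroot_apply cartan_commute)
qed simp_all

lemma sroot_in_wts [simp]: "sroot n m \<in> wts n"
  by (simp add: sroot_def wts_def)

lemma uminus_in_wts_iff [simp]: "- mu \<in> wts n \<longleftrightarrow> mu \<in> wts n"
  by (simp add: wts_def)

lemma add_in_wts [simp]: "mu \<in> wts n \<Longrightarrow> la \<in> wts n \<Longrightarrow> mu + la \<in> wts n"
  and diff_in_wts [simp]: "mu \<in> wts n \<Longrightarrow> la \<in> wts n \<Longrightarrow> mu - la \<in> wts n"
  by (simp_all add: wts_def)

lemma sum_sroots_in_wts [simp]: "(\<Sum>k\<in>A. sroot n k) \<in> wts n"
  by (induction A rule: infinite_finite_induct) (auto simp: wts_def sroot_def)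

section \<open>The quantized enveloping algebra\<close>

locale uq_algebra =
  fixes n :: nat and phi :: "'k::field_char_0 poly fract \<Rightarrow> 'a::ring_1"
    and E F :: "nat \<Rightarrow> 'a" and K :: "(nat \<Rightarrow> int) \<Rightarrow> 'a"
  assumes uq_rels: "uq_rels n phi E F K"

sublocale uq_algebra \<subseteq> qscalars phi qq
proof unfold_locales
  fix x y :: "'k poly fract" and a :: 'a
  show "phi (x + y) = phi x + phi y" "phi (x * y) = phi x * phi y" "phi 1 = 1"
    "phi x * a = a * phi x"
    using uq_rels unfolding uq_rels_def by blast+
qed (fact qq_nonzero qq_plus_inverse_nonzero qq_minus_inverse_nonzero)+

context uq_algebra
begin

lemma K_zero: "K 0 = 1"
  using uq_rels unfolding uq_rels_def by blast

lemma K_add: "mu \<in> wts n \<Longrightarrow> la \<in> wts n \<Longrightarrow> K mu * K la = K (mu + la)"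
  using uq_rels unfolding uq_rels_def by blast

lemma K_commute: "mu \<in> wts n \<Longrightarrow> la \<in> wts n \<Longrightarrow> K mu * K la = K la * K mu"
  by (simp add: K_add add.commute)

lemma K_E: "mu \<in> wts n \<Longrightarrow> i \<in> {1..n} \<Longrightarrow> K mu * E i = phi (qq powi (mu i)) * E i * K mu"
  using uq_rels unfolding uq_rels_def by blast

lemma K_F: "mu \<in> wts n \<Longrightarrow> i \<in> {1..n} \<Longrightarrow> K mu * F i = phi (qq powi (- mu i)) * F i * K mu"
  using uq_rels unfolding uq_rels_def by blast

lemma E_F_commutator_cases:
  "i \<in> {1..n} \<Longrightarrow> j \<in> {1..n} \<Longrightarrow>
     E i * F j - F j * E i = (if i = j then inv_qdiff * (K (sroot n i) - K (- sroot n i)) else 0)"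
  using uq_rels unfolding uq_rels_def by blast

lemma E_F_commutator:
  "i \<in> {1..n} \<Longrightarrow> E i * F i - F i * E i = inv_qdiff * (K (sroot n i) - K (- sroot n i))"
  using E_F_commutator_cases[of i i] by simp

lemma E_F_commute: "i \<in> {1..n} \<Longrightarrow> j \<in> {1..n} \<Longrightarrow> i \<noteq> j \<Longrightarrow> E i * F j = F j * E i"
  using E_F_commutator_cases[of i j] by simp

lemma serre_E:
  assumes "i \<in> {1..n}" "j \<in> {1..n}" "\<bar>int i - int j\<bar> = 1"
  shows "qserre phi qq (E i) (E j) = 0"
  unfolding qserre_def using assms uq_rels unfolding uq_rels_def by blast

lemma E_far_commute:
  assumes "i \<in> {1..n}" "j \<in> {1..n}" "i + 2 \<le> j \<or> j + 2 \<le> i"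
  shows "E i * E j = E j * E i"
proof -
  have "\<bar>int i - int j\<bar> > 1" using assms(3) by auto
  thus ?thesis using assms(1,2) uq_rels unfolding uq_rels_def by blast
qed

lemma F_far_commute:
  assumes "i \<in> {1..n}" "j \<in> {1..n}" "i + 2 \<le> j \<or> j + 2 \<le> i"
  shows "F i * F j = F j * F i"
proof -
  have "\<bar>int i - int j\<bar> > 1" using assms(3) by auto
  thus ?thesis using assms(1,2) uq_rels unfolding uq_rels_def by blast
qed

abbreviation E_chain :: "nat \<Rightarrow> nat \<Rightarrow> 'a" where
  "E_chain \<equiv> qcomm_chain phi (1 / qq) E"

abbreviation E_chain_desc :: "nat \<Rightarrow> nat \<Rightarrow> 'a" where
  "E_chain_desc \<equiv> qcomm_chain_desc phi (1 / qq) E"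

abbreviation F_chain :: "nat \<Rightarrow> nat \<Rightarrow> 'a" where
  "F_chain \<equiv> qcomm_chain phi qq F"

lemma EXp_eq_E_chain: "EXp n r phi E = E_chain (r + 1) (n - r)"
  by (simp add: EXp_def qcomm_chain_def)

lemma EXm_eq_E_chain_desc: "EXm n r phi E = E_chain_desc (r + 1) (n - r)"
  by (simp add: EXm_def qcomm_chain_desc_def)

lemma FXp_eq_F_chain: "FXp n r phi F = F_chain (r + 1) (n - r)"
  by (simp add: FXp_def qcomm_chain_def)

lemma E_chain_snoc:
  "1 \<le> i \<Longrightarrow> i \<le> j \<Longrightarrow> Suc j \<le> n \<Longrightarrow> E_chain i (Suc j) = qcomm phi (1 / qq) (E_chain i j) (E (Suc j))"
  by (rule qcomm_chain_snoc) (auto intro: E_far_commute)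

lemma F_chain_snoc:
  "1 \<le> i \<Longrightarrow> i \<le> j \<Longrightarrow> Suc j \<le> n \<Longrightarrow> F_chain i (Suc j) = qcomm phi qq (F_chain i j) (F (Suc j))"
  by (rule qcomm_chain_snoc) (auto intro: F_far_commute)

lemma K_E_chain:
  "mu \<in> wts n \<Longrightarrow> 1 \<le> i \<Longrightarrow> i \<le> j \<Longrightarrow> j \<le> n \<Longrightarrow>
     K mu * E_chain i j = phi (qq powi (\<Sum>k=i..j. mu k)) * E_chain i j * K mu"
  by (rule qcomm_chain_weight[OF qq_nonzero]) (auto intro: K_E)

lemma K_E_chain_desc:
  "mu \<in> wts n \<Longrightarrow> 1 \<le> i \<Longrightarrow> i \<le> j \<Longrightarrow> j \<le> n \<Longrightarrow>
     K mu * E_chain_desc i j = phi (qq powi (\<Sum>k=i..j. mu k)) * E_chain_desc i j * K mu"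
  by (rule qcomm_chain_desc_weight[OF qq_nonzero]) (auto intro: K_E)

lemma K_F_chain:
  "mu \<in> wts n \<Longrightarrow> 1 \<le> i \<Longrightarrow> i \<le> j \<Longrightarrow> j \<le> n \<Longrightarrow>
     K mu * F_chain i j = phi (qq powi (\<Sum>k=i..j. - mu k)) * F_chain i j * K mu"
  by (rule qcomm_chain_weight[OF qq_nonzero]) (auto intro: K_F)

lemma E_commute_E_chain_far:
  "k \<in> {1..n} \<Longrightarrow> 1 \<le> i \<Longrightarrow> i \<le> j \<Longrightarrow> j \<le> n \<Longrightarrow>
     \<forall>l\<in>{i..j}. k + 2 \<le> l \<or> l + 2 \<le> k \<Longrightarrow> E k * E_chain i j = E_chain i j * E k"
  by (rule qcomm_chain_commute) (auto intro!: E_far_commute)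

lemma E_E_chain_qcommute:
  assumes "1 \<le> i" "i < j" "j \<le> n"
  shows "E i * E_chain i j = phi qq * E_chain i j * E i"
proof -
  have "qserre phi qq (E i) (E_chain (Suc i) j) = 0"
  proof (cases "Suc i = j")
    case True
    thus ?thesis using assms by (simp add: serre_E)
  next
    case False
    hence "Suc i < j" using assms by simp
    have "E_chain (Suc (Suc i)) j * E i = E i * E_chain (Suc (Suc i)) j"
      using E_commute_E_chain_far[of i "Suc (Suc i)" j] assms \<open>Suc i < j\<close> by auto
    thus ?thesis
      using qserre_qcomm_right serre_E[of i "Suc i"] assms \<open>Suc i < j\<close>
      by (simp add: qcomm_chain_Cons[OF \<open>Suc i < j\<close>])
  qed
  hence "E i * E_chain i j - phi qq * E_chain i j * E i = 0"
    using qserre_eq_qcomm[of "E i" "E_chain (Suc i) j"]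
    by (simp add: qcomm_chain_Cons[OF \<open>i < j\<close>])
  thus ?thesis by simp
qed

lemma E_middle_commute_E_chain3:
  assumes "1 \<le> i" "Suc (Suc i) \<le> n"
  shows "E (Suc i) * E_chain i (Suc (Suc i)) = E_chain i (Suc (Suc i)) * E (Suc i)"
proof -
  have "E i * E (Suc (Suc i)) = E (Suc (Suc i)) * E i"
    using E_far_commute[of i "Suc (Suc i)"] assms by auto
  moreover have "qserre phi qq (E (Suc i)) (E i) = 0"
    and "qserre phi qq (E (Suc i)) (E (Suc (Suc i))) = 0"
    using serre_E[of "Suc i" i] serre_E[of "Suc i" "Suc (Suc i)"] assms by auto
  ultimately show ?thesis
    by (simp add: qcomm_chain_Cons commute_qcomm_qcomm_of_qserre)
qed

lemma E_chain_rebracket: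
  assumes "1 \<le> i" "Suc (Suc i) < j" "j \<le> n"
  shows "E_chain i j = qcomm phi (1 / qq) (E_chain i (Suc (Suc i))) (E_chain (Suc (Suc (Suc i))) j)"
proof -
  let ?qc = "qcomm phi (1 / qq)" and ?W = "E_chain (Suc (Suc (Suc i))) j"
  have "E (Suc i) * ?W = ?W * E (Suc i)" and "E i * ?W = ?W * E i"
    using E_commute_E_chain_far[of "Suc i" "Suc (Suc (Suc i))" j]
      E_commute_E_chain_far[of i "Suc (Suc (Suc i))" j] assms by auto
  moreover have "E_chain i j = ?qc (E i) (?qc (E (Suc i)) (?qc (E (Suc (Suc i))) ?W))"
    using assms by (simp add: qcomm_chain_Cons)
  ultimately have "E_chain i j = ?qc (?qc (E i) (?qc (E (Suc i)) (E (Suc (Suc i))))) ?W"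
    by (simp add: qcomm_qcomm_assoc)
  thus ?thesis
    by (simp add: qcomm_chain_Cons)
qed

lemma E_commute_E_chain:
  assumes "1 \<le> i" "i < k" "k < j" "j \<le> n"
  shows "E k * E_chain i j = E_chain i j * E k"
  using assms
proof (induction "k - i" arbitrary: i)
  case (Suc d)
  show ?case
  proof (cases "k = Suc i")
    case True
    have middle: "E k * E_chain i (Suc k) = E_chain i (Suc k) * E k"
      using E_middle_commute_E_chain3[of i] Suc.prems True by simp
    show ?thesis
    proof (cases "j = Suc k")
      case False
      have "E k * E_chain (Suc (Suc k)) j = E_chain (Suc (Suc k)) j * E k"
        using E_commute_E_chain_far[of k "Suc (Suc k)" j] Suc.prems False by auto
      thus ?thesis
        using E_chain_rebracket[of i j] Suc.prems True False middle by (simp add: qcomm_commute)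
    qed (use middle in simp)
  next
    case False
    hence "Suc i < k" using Suc.prems by simp
    have "E k * E_chain (Suc i) j = E_chain (Suc i) j * E k"
      using Suc.hyps(1)[of "Suc i"] Suc.hyps(2) Suc.prems \<open>Suc i < k\<close> by simp
    moreover have "E k * E i = E i * E k"
      using E_far_commute[of k i] Suc.prems \<open>Suc i < k\<close> by auto
    ultimately show ?thesis
      using Suc.prems by (simp add: qcomm_chain_Cons qcomm_commute)
  qed
qed simp

lemma E_chain_desc_E_chain_qcommute:
  assumes "1 \<le> i" "i \<le> j'" "j' \<le> j" "Suc j \<le> n"
  shows "E_chain_desc i j' * E_chain i (Suc j) = phi qq * E_chain i (Suc j) * E_chain_desc i j'"
  using assms
proof (induction j')
  case (Suc j')
  show ?case
  proof (cases "i = Suc j'")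
    case True
    thus ?thesis using E_E_chain_qcommute[of i "Suc j"] Suc.prems by simp
  next
    case False
    hence "i \<le> j'" using Suc.prems by simp
    let ?X = "E_chain i (Suc j)" and ?A = "E_chain_desc i j'" and ?e = "E (Suc j')"
    have IH: "?A * ?X = phi qq * ?X * ?A"
      using Suc.IH Suc.prems \<open>i \<le> j'\<close> by simp
    have eX: "?e * ?X = ?X * ?e"
      using E_commute_E_chain[of i "Suc j'" "Suc j"] Suc.prems \<open>i \<le> j'\<close> by simp
    have "E_chain_desc i (Suc j') * ?X = ?e * (?A * ?X) - phi (1 / qq) * (?A * (?e * ?X))"
      by (simp add: qcomm_chain_desc_Suc[OF \<open>i \<le> j'\<close>] qcomm_def algebra_simps)
    also have "\<dots> = phi qq * (?X * (?e * ?A)) - phi (1 / qq) * (phi qq * (?X * (?A * ?e)))"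
      using IH eX
      by (simp add: mult.assoc[symmetric] phi_central) (simp add: mult.assoc mult_phi_left_commute)
    also have "\<dots> = phi qq * ?X * E_chain_desc i (Suc j')"
      by (simp add: qcomm_chain_desc_Suc[OF \<open>i \<le> j'\<close>] qcomm_def algebra_simps
          mult_phi_left_commute[of ?X] phi_mult_phi mult.commute)
    finally show ?thesis .
  qed
qed simp

lemma E_chain_desc_F_commute:
  "1 \<le> i \<Longrightarrow> j \<le> n \<Longrightarrow> k \<in> {1..n} \<Longrightarrow> k \<notin> {i..j} \<Longrightarrow> i \<le> j \<Longrightarrow>
     E_chain_desc i j * F k = F k * E_chain_desc i j"
  by (intro qcomm_chain_desc_commute[symmetric]) (auto intro!: E_F_commute[symmetric])

lemma E_F_chain_commute:
  "1 \<le> i \<Longrightarrow> j \<le> n \<Longrightarrow> k \<in> {1..n} \<Longrightarrow> k \<notin> {i..j} \<Longrightarrow> i \<le> j \<Longrightarrow>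
     E k * F_chain i j = F_chain i j * E k"
  by (intro qcomm_chain_commute) (auto intro!: E_F_commute)

lemma E_chain_desc_F_chain_commutator:
  assumes "1 \<le> i" "i \<le> j" "j \<le> n"
  shows "E_chain_desc i j * F_chain i j - F_chain i j * E_chain_desc i j
    = inv_qdiff * (K (\<Sum>k=i..j. sroot n k) - K (- (\<Sum>k=i..j. sroot n k)))"
  using assms(2,3)
proof (induction j rule: dec_induct)
  case base
  have "i \<in> {1..n}" using base assms(1) by simp
  moreover have "(\<Sum>k=i..i. sroot n k) = sroot n i" by simp
  ultimately show ?case by (simp only: qcomm_chain_same qcomm_chain_desc_same E_F_commutator)
next
  case (step j)
  hence ij: "i \<le> j" and jn: "Suc j \<le> n" by simp_all
  let ?rs = "\<Sum>k=i..j. sroot n k" and ?a = "sroot n (Suc j)"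
  have IH: "E_chain_desc i j * F_chain i j - F_chain i j * E_chain_desc i j
      = inv_qdiff * (K ?rs - K (- ?rs))"
    by (rule step.IH[OF Suc_leD[OF jn]])
  have rs_next: "?rs (Suc j) = -1" and a_sum: "(\<Sum>k=i..j. ?a k) = -1"
    using sum_sroots_apply[of "Suc j" n "{i..j}"] sum_sroot[of i j n "Suc j"] ij jn assms(1)
    by (simp_all add: sum_cartan)
  have "E_chain_desc i (Suc j) * F_chain i (Suc j) - F_chain i (Suc j) * E_chain_desc i (Suc j)
      = inv_qdiff * (K ?rs * K ?a - K (- ?rs) * K (- ?a))"
    unfolding qcomm_chain_desc_Suc[OF ij] F_chain_snoc[OF assms(1) ij jn]
  proof (rule commutator_qcomm_qcomm[OF IH])
    show "E (Suc j) * F (Suc j) - F (Suc j) * E (Suc j) = inv_qdiff * (K ?a - K (- ?a))"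
      using jn by (simp add: E_F_commutator)
    show "E_chain_desc i j * F (Suc j) = F (Suc j) * E_chain_desc i j"
      and "E (Suc j) * F_chain i j = F_chain i j * E (Suc j)"
      using E_chain_desc_F_commute E_F_chain_commute assms(1) ij jn by auto
    show "K ?rs * F (Suc j) = phi qq * F (Suc j) * K ?rs"
      using K_F[of ?rs "Suc j"] jn rs_next by auto
    show "K (- ?rs) * F (Suc j) = phi (1 / qq) * F (Suc j) * K (- ?rs)"
      using K_F[of "- ?rs" "Suc j"] jn rs_next by (auto simp: power_int_minus divide_inverse)
    show "K (- ?rs) * E (Suc j) = phi qq * E (Suc j) * K (- ?rs)"
      using K_E[of "- ?rs" "Suc j"] jn rs_next by auto
    show "K ?a * E_chain_desc i j = phi (1 / qq) * E_chain_desc i j * K ?a"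
      using K_E_chain_desc[of ?a i j] assms(1) ij jn a_sum
      by (auto simp: power_int_minus divide_inverse)
    show "K ?a * F_chain i j = phi qq * F_chain i j * K ?a"
      using K_F_chain[of ?a i j] assms(1) ij jn a_sum by (auto simp: sum_negf)
    show "K (- ?a) * F_chain i j = phi (1 / qq) * F_chain i j * K (- ?a)"
      using K_F_chain[of "- ?a" i j] assms(1) ij jn a_sum
      by (auto simp: power_int_minus divide_inverse)
    show "K ?a * K (- ?rs) = K (- ?rs) * K ?a" "K (- ?a) * K (- ?rs) = K (- ?rs) * K (- ?a)"
      by (auto intro: K_commute)
  qed
  also have "K ?rs * K ?a = K (\<Sum>k=i..Suc j. sroot n k)"
    using K_add[of ?rs ?a] ij by simp
  also have "K (- ?rs) * K (- ?a) = K (- (\<Sum>k=i..Suc j. sroot n k))"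
    using K_add[of "- ?rs" "- ?a"] ij by (simp add: add.commute)
  finally show ?case .
qed

end

section \<open>The generators \<open>B_(r-1)\<close> and \<open>B_r\<close>\<close>

locale qsp_setting = uq_algebra n phi E F K
  for n :: nat and phi :: "'k::field_char_0 poly fract \<Rightarrow> 'a::ring_1" and E F K +
  fixes r :: nat and c :: "nat \<Rightarrow> 'k poly fract"
  assumes r_ge: "2 \<le> r" and r_le: "2 * r + 1 \<le> n"
begin

abbreviation B :: "nat \<Rightarrow> 'a" where
  "B \<equiv> Bgen n r phi E F K c"

abbreviation L_weight :: "nat \<Rightarrow> int" where
  "L_weight \<equiv> sroot n r - sroot n (Suc (n - r))"

abbreviation KX_weight :: "nat \<Rightarrow> int" where
  "KX_weight \<equiv> \<Sum>j=Suc r..n - r. sroot n j"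

lemma indices_in_range: "r - 1 \<in> {1..n}" "r \<in> {1..n}" "Suc (Suc (n - r)) \<in> {1..n}"
  using r_ge r_le by auto

lemma X_bounds: "Suc r \<le> n - r" "Suc (n - r) \<le> n"
  using r_ge r_le by auto

lemma B_prev_eq:
  "B (r - 1) = F (r - 1) - phi (c (r - 1)) * E (Suc (Suc (n - r))) * K (- sroot n (r - 1))"
proof -
  have "tau n (r - 1) = Suc (Suc (n - r))" "r - 1 \<noteq> r" "r - 1 \<noteq> tau n r"
    using r_ge r_le by (auto simp: tau_def)
  thus ?thesis by (simp add: Bgen_def)
qed

lemma B_r_eq: "B r = F r - phi (c r) * E_chain (Suc r) (Suc (n - r)) * K (- sroot n r)"
proof -
  have "tau n r = Suc (n - r)" using r_le by (simp add: tau_def)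
  thus ?thesis
    using r_ge r_le by (simp add: Bgen_def EXp_eq_E_chain E_chain_snoc)
qed

lemma Lw_r_eq: "Lw n K r = K L_weight"
  using r_le by (simp add: Lw_def tau_def)

lemma KX_eq: "KX n r K = K KX_weight"
  by (simp add: KX_def)

lemma EXm_eq: "EXm n r phi E = E_chain_desc (Suc r) (n - r)"
  by (simp add: EXm_eq_E_chain_desc)

lemma FXp_eq: "FXp n r phi F = F_chain (Suc r) (n - r)"
  by (simp add: FXp_eq_F_chain)

lemma L_weight_apply: "L_weight (r - 1) = - 1" "L_weight r = 2" "L_weight (Suc (Suc (n - r))) = 1"
  using r_ge r_le by (auto simp: sroot_apply cartan_def)

lemma KX_weight_apply: "KX_weight (r - 1) = 0" "KX_weight r = - 1" "KX_weight (Suc (Suc (n - r))) = 0"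
  using r_ge r_le by (auto simp: sum_sroots_apply sum_cartan)

lemma sum_KX_weight: "(\<Sum>k=Suc r..Suc (n - r). KX_weight k) = 1"
proof -
  have "(\<Sum>k=Suc r..Suc (n - r). KX_weight k) = (\<Sum>k=Suc r..Suc (n - r). \<Sum>j=Suc r..n - r. cartan j k)"
    using X_bounds by (intro sum.cong) (auto simp: sum_sroots_apply cartan_commute)
  thus ?thesis
    using sum_cartan_segment[of "Suc r" "n - r"] X_bounds by simp
qed

lemma EXm_B_prev: "EXm n r phi E * B (r - 1) = B (r - 1) * EXm n r phi E"
  unfolding B_prev_eq EXm_eq
proof (rule diff_smult_mult_commute)
  let ?X = "E_chain_desc (Suc r) (n - r)"
  show "?X * F (r - 1) = F (r - 1) * ?X"
    using E_chain_desc_F_commute[of "Suc r" "n - r" "r - 1"] r_ge X_bounds by simp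
  show "?X * E (Suc (Suc (n - r))) = E (Suc (Suc (n - r))) * ?X"
    using r_ge r_le by (intro qcomm_chain_desc_commute[symmetric]) (auto intro!: E_far_commute)
  have "(\<Sum>k=Suc r..n - r. (- sroot n (r - 1)) k) = 0"
    using r_ge X_bounds by (simp add: sum_negf sum_sroot sum_cartan) arith
  hence "K (- sroot n (r - 1)) * ?X = ?X * K (- sroot n (r - 1))"
    using K_E_chain_desc[of "- sroot n (r - 1)" "Suc r" "n - r"] X_bounds by simp
  thus "?X * K (- sroot n (r - 1)) = K (- sroot n (r - 1)) * ?X"
    by simp
qed

lemma Lw_B_prev: "Lw n K r * B (r - 1) = phi qq * B (r - 1) * Lw n K r"
  unfolding B_prev_eq Lw_r_eq
proof (rule diff_smult_mult_weight)
  show "K L_weight * F (r - 1) = phi qq * F (r - 1) * K L_weight"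
    and "K L_weight * E (Suc (Suc (n - r))) = phi qq * E (Suc (Suc (n - r))) * K L_weight"
    using K_F[OF _ indices_in_range(1), of L_weight, unfolded L_weight_apply]
      K_E[OF _ indices_in_range(3), of L_weight, unfolded L_weight_apply] by simp_all
  show "K L_weight * K (- sroot n (r - 1)) = phi 1 * K (- sroot n (r - 1)) * K L_weight"
    by (simp add: K_commute)
qed simp

lemma KX_B_prev: "KX n r K * B (r - 1) = B (r - 1) * KX n r K"
  unfolding B_prev_eq KX_eq
proof (rule diff_smult_mult_commute)
  show "K KX_weight * F (r - 1) = F (r - 1) * K KX_weight"
    and "K KX_weight * E (Suc (Suc (n - r))) = E (Suc (Suc (n - r))) * K KX_weight"
    using K_F[OF _ indices_in_range(1), of KX_weight, unfolded KX_weight_apply]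
      K_E[OF _ indices_in_range(3), of KX_weight, unfolded KX_weight_apply] by simp_all
  show "K KX_weight * K (- sroot n (r - 1)) = K (- sroot n (r - 1)) * K KX_weight"
    by (simp add: K_commute)
qed

lemma EXm_B_r: "EXm n r phi E * B r = B r * EXm n r phi E"
proof -
  let ?X = "E_chain_desc (Suc r) (n - r)" and ?Y = "E_chain (Suc r) (Suc (n - r))"
  have "?X * (F r - phi (c r) * ?Y * K (- sroot n r))
      = phi 1 * (F r - phi (c r) * ?Y * K (- sroot n r)) * ?X"
  proof (rule diff_smult_mult_weight)
    show "?X * F r = phi 1 * F r * ?X"
      using E_chain_desc_F_commute[of "Suc r" "n - r" r] r_ge X_bounds by simp
    show "?X * ?Y = phi qq * ?Y * ?X"
      using E_chain_desc_E_chain_qcommute[of "Suc r" "n - r" "n - r"] X_bounds by simp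
    have "(\<Sum>k=Suc r..n - r. (- sroot n r) k) = 1"
      using r_ge X_bounds by (simp add: sum_negf sum_sroot sum_cartan)
    hence "K (- sroot n r) * ?X = phi qq * ?X * K (- sroot n r)"
      using K_E_chain_desc[of "- sroot n r" "Suc r" "n - r"] X_bounds by simp
    hence "phi (1 / qq) * (K (- sroot n r) * ?X) = ?X * K (- sroot n r)"
      by (simp add: mult.assoc q_cancel)
    thus "?X * K (- sroot n r) = phi (1 / qq) * K (- sroot n r) * ?X"
      by (simp add: mult.assoc)
  qed (simp add: qq_nonzero)
  thus ?thesis by (simp add: B_r_eq EXm_eq)
qed

lemma Lw_B_r: "Lw n K r * B r = phi (qq powi (- 2)) * B r * Lw n K r"
  unfolding B_r_eq Lw_r_eq
proof (rule diff_smult_mult_weight)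
  show "K L_weight * F r = phi (qq powi (- 2)) * F r * K L_weight"
    using K_F[OF _ indices_in_range(2), of L_weight, unfolded L_weight_apply] by simp
  have "(\<Sum>k=Suc r..Suc (n - r). L_weight k) = - 2"
    using r_ge X_bounds by (simp add: sum_subtractf sum_sroot sum_cartan del: sum.cl_ivl_Suc)
  thus "K L_weight * E_chain (Suc r) (Suc (n - r))
      = phi (qq powi (- 2)) * E_chain (Suc r) (Suc (n - r)) * K L_weight"
    using K_E_chain[of L_weight "Suc r" "Suc (n - r)"] X_bounds by simp
  show "K L_weight * K (- sroot n r) = phi 1 * K (- sroot n r) * K L_weight"
    by (simp add: K_commute)
qed simp

lemma Lw_FXp: "Lw n K r * FXp n r phi F = FXp n r phi F * Lw n K r"
proof -
  have "(\<Sum>k=Suc r..n - r. - L_weight k) = 0"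
    using r_ge X_bounds by (simp add: sum_negf sum_subtractf sum_sroot sum_cartan)
  thus ?thesis
    unfolding Lw_r_eq FXp_eq using K_F_chain[of L_weight "Suc r" "n - r"] X_bounds by simp
qed

lemma EXm_FXp_commutator:
  "EXm n r phi E * FXp n r phi F - FXp n r phi F * EXm n r phi E
     = inv_qdiff * (KX n r K - K (- KX_weight))"
  unfolding EXm_eq FXp_eq KX_eq
  using E_chain_desc_F_chain_commutator[of "Suc r" "n - r"] X_bounds by simp

lemma KX_B_r: "KX n r K * B r = phi qq * B r * KX n r K"
  unfolding B_r_eq KX_eq
proof (rule diff_smult_mult_weight)
  show "K KX_weight * F r = phi qq * F r * K KX_weight"
    using K_F[OF _ indices_in_range(2), of KX_weight, unfolded KX_weight_apply] by simp
  show "K KX_weight * E_chain (Suc r) (Suc (n - r))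
      = phi qq * E_chain (Suc r) (Suc (n - r)) * K KX_weight"
    using K_E_chain[of KX_weight "Suc r" "Suc (n - r)"] sum_KX_weight X_bounds by simp
  show "K KX_weight * K (- sroot n r) = phi 1 * K (- sroot n r) * K KX_weight"
    by (simp add: K_commute)
qed simp

lemma KX_inverse_B_r: "K (- KX_weight) * B r = phi (1 / qq) * B r * K (- KX_weight)"
  unfolding B_r_eq
proof (rule diff_smult_mult_weight)
  have "(- KX_weight) r = 1"
    using KX_weight_apply(2) by simp
  thus "K (- KX_weight) * F r = phi (1 / qq) * F r * K (- KX_weight)"
    using K_F[OF _ indices_in_range(2), of "- KX_weight"] by (simp add: power_int_minus divide_inverse)
  have "(\<Sum>k=Suc r..Suc (n - r). (- KX_weight) k) = - 1"
    using sum_KX_weight by (simp add: sum_negf del: sum.cl_ivl_Suc)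
  thus "K (- KX_weight) * E_chain (Suc r) (Suc (n - r))
      = phi (1 / qq) * E_chain (Suc r) (Suc (n - r)) * K (- KX_weight)"
    using K_E_chain[of "- KX_weight" "Suc r" "Suc (n - r)"] X_bounds
    by (simp add: power_int_minus divide_inverse)
  show "K (- KX_weight) * K (- sroot n r) = phi 1 * K (- sroot n r) * K (- KX_weight)"
    by (simp add: K_commute)
qed simp

lemma Lw_KX: "Lw n K r * KX n r K = KX n r K * Lw n K r"
  unfolding Lw_r_eq KX_eq by (simp add: K_commute)

lemma Z_tau_r_commutation:
  "- (phi a * EXm n r phi E * Lw n K r) * qcomm phi qq (B (r - 1)) (qcomm phi qq (B r) (FXp n r phi F))
     = phi (1 / qq) * qcomm phi qq (B (r - 1)) (qcomm phi qq (B r) (FXp n r phi F))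
         * - (phi a * EXm n r phi E * Lw n K r)
       + phi a * qcomm phi qq (B (r - 1)) (B r) * Lw n K r * KX n r K"
  by (rule nested_qcomm_commutation[OF EXm_B_prev Lw_B_prev KX_B_prev EXm_B_r Lw_B_r Lw_FXp
        EXm_FXp_commutator KX_B_r KX_inverse_B_r Lw_KX])

end

section \<open>The diagram automorphism\<close>

definition tau_weight :: "nat \<Rightarrow> (nat \<Rightarrow> int) \<Rightarrow> (nat \<Rightarrow> int)" where
  "tau_weight n mu = (\<lambda>j. if 1 \<le> j \<and> j \<le> n then mu (tau n j) else 0)"

lemma tau_in_range: "j \<in> {1..n} \<Longrightarrow> tau n j \<in> {1..n}"
  by (auto simp: tau_def)

lemma tau_tau: "j \<in> {1..n} \<Longrightarrow> tau n (tau n j) = j"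
  by (auto simp: tau_def)

lemma tau_eq_iff: "i \<in> {1..n} \<Longrightarrow> j \<in> {1..n} \<Longrightarrow> tau n i = tau n j \<longleftrightarrow> i = j"
  by (metis tau_tau)

lemma abs_diff_tau:
  "i \<in> {1..n} \<Longrightarrow> j \<in> {1..n} \<Longrightarrow> \<bar>int (tau n i) - int (tau n j)\<bar> = \<bar>int i - int j\<bar>"
  by (auto simp: tau_def of_nat_diff)

lemma tau_weight_in_wts [simp]: "tau_weight n mu \<in> wts n"
  by (simp add: tau_weight_def wts_def)

lemma tau_weight_zero: "tau_weight n 0 = 0"
  and tau_weight_add: "tau_weight n (mu + la) = tau_weight n mu + tau_weight n la"
  and tau_weight_uminus: "tau_weight n (- mu) = - tau_weight n mu"
  and tau_weight_diff: "tau_weight n (mu - la) = tau_weight n mu - tau_weight n la"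
  by (simp_all add: tau_weight_def fun_eq_iff)

lemma tau_weight_sum: "tau_weight n (\<Sum>k\<in>A. f k) = (\<Sum>k\<in>A. tau_weight n (f k))"
proof (induction A rule: infinite_finite_induct)
  case (insert x A)
  show ?case
    by (simp only: sum.insert[OF insert.hyps(1,2)] tau_weight_add insert.IH)
qed (metis sum.infinite tau_weight_zero, simp only: sum.empty tau_weight_zero)

lemma tau_weight_apply_tau: "j \<in> {1..n} \<Longrightarrow> tau_weight n mu (tau n j) = mu j"
  using tau_in_range[of j n] by (simp add: tau_weight_def tau_tau)

lemma tau_weight_sroot: "i \<in> {1..n} \<Longrightarrow> tau_weight n (sroot n i) = sroot n (tau n i)"
  by (auto simp: tau_weight_def sroot_def tau_def cartan_def fun_eq_iff)

context uq_algebra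
begin

lemma tau_twisted_pair_relations:
  assumes ij: "i \<in> {1..n}" "j \<in> {1..n}"
  shows "E (tau n i) * F (tau n j) - F (tau n j) * E (tau n i)
      = (if i = j then inv_qdiff * (K (tau_weight n (sroot n i)) - K (tau_weight n (- sroot n i)))
         else 0)"
    and "\<bar>int i - int j\<bar> = 1 \<Longrightarrow> qserre phi qq (E (tau n i)) (E (tau n j)) = 0"
    and "\<bar>int i - int j\<bar> = 1 \<Longrightarrow> qserre phi qq (F (tau n i)) (F (tau n j)) = 0"
    and "\<bar>int i - int j\<bar> > 1 \<Longrightarrow> E (tau n i) * E (tau n j) = E (tau n j) * E (tau n i)"
    and "\<bar>int i - int j\<bar> > 1 \<Longrightarrow> F (tau n i) * F (tau n j) = F (tau n j) * F (tau n i)"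
proof -
  have ij': "tau n i \<in> {1..n}" "tau n j \<in> {1..n}"
    using tau_in_range ij by auto
  show "E (tau n i) * F (tau n j) - F (tau n j) * E (tau n i)
      = (if i = j then inv_qdiff * (K (tau_weight n (sroot n i)) - K (tau_weight n (- sroot n i)))
         else 0)"
    using E_F_commutator_cases[OF ij']
    by (simp add: tau_eq_iff[OF ij] tau_weight_uminus tau_weight_sroot[OF ij(1)]
        tau_weight_sroot[OF ij(2)])
  assume "\<bar>int i - int j\<bar> = 1"
  hence "\<bar>int (tau n i) - int (tau n j)\<bar> = 1"
    using abs_diff_tau[OF ij] by simp
  thus "qserre phi qq (E (tau n i)) (E (tau n j)) = 0" and "qserre phi qq (F (tau n i)) (F (tau n j)) = 0"
    using uq_rels ij' unfolding uq_rels_def qserre_def by blast+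
next
  assume "\<bar>int i - int j\<bar> > 1"
  hence "\<bar>int (tau n i) - int (tau n j)\<bar> > 1"
    using abs_diff_tau[OF ij] by simp
  thus "E (tau n i) * E (tau n j) = E (tau n j) * E (tau n i)"
    and "F (tau n i) * F (tau n j) = F (tau n j) * F (tau n i)"
    using uq_rels tau_in_range[OF ij(1)] tau_in_range[OF ij(2)] unfolding uq_rels_def by blast+
qed

lemma uq_rels_tau_twist: "uq_rels n phi (\<lambda>i. E (tau n i)) (\<lambda>i. F (tau n i)) (\<lambda>mu. K (tau_weight n mu))"
proof -
  have KE: "K (tau_weight n mu) * E (tau n i) = phi (qq powi (mu i)) * E (tau n i) * K (tau_weight n mu)"
    and KF: "K (tau_weight n mu) * F (tau n i) = phi (qq powi (- mu i)) * F (tau n i) * K (tau_weight n mu)"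
    if "i \<in> {1..n}" for mu i
    using K_E[OF tau_weight_in_wts tau_in_range[OF that]]
      K_F[OF tau_weight_in_wts tau_in_range[OF that]]
    by (simp_all add: tau_weight_apply_tau[OF that])
  have KK: "K (tau_weight n mu) * K (tau_weight n la) = K (tau_weight n (mu + la))" for mu la
    using K_add[OF tau_weight_in_wts tau_weight_in_wts] by (simp add: tau_weight_add)
  have K0: "K (tau_weight n 0) = 1"
    by (simp add: tau_weight_zero K_zero)
  show ?thesis
    unfolding uq_rels_def
    by (intro conjI ballI allI impI)
      (assumption | rule phi_add phi_mult phi_one phi_central KE KF KK K0
        tau_twisted_pair_relations[unfolded qserre_def])+
qed

end

lemma map_tau_upt:
  assumes "2 * r + 1 \<le> n"
  shows "map (tau n) [r+1..<n-r] = rev [r+2..<n-r+1]"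
proof (rule nth_equalityI)
  show "length (map (tau n) [r+1..<n-r]) = length (rev [r+2..<n-r+1])"
    by (simp only: length_map length_rev length_upt)
  fix k assume "k < length (map (tau n) [r+1..<n-r])"
  hence k: "k < n - r - (r + 1)" by (simp only: length_map length_upt)
  have l2: "length [r+2..<n-r+1] = n - r + 1 - (r + 2)" by (simp only: length_upt)
  have "map (tau n) [r+1..<n-r] ! k = tau n (r + 1 + k)"
    using k by (simp only: nth_map length_upt nth_upt)
  also have "\<dots> = r + 2 + (n - r + 1 - (r + 2) - Suc k)"
    using k assms by (simp add: tau_def)
  also have "\<dots> = rev [r+2..<n-r+1] ! k"
    using k assms by (simp only: rev_nth l2 nth_upt)
  finally show "map (tau n) [r+1..<n-r] ! k = rev [r+2..<n-r+1] ! k" .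
qed

lemma map_tau_rev_upt:
  assumes "2 * r + 1 \<le> n"
  shows "map (tau n) (rev [r+2..<n-r+1]) = [r+1..<n-r]"
proof -
  have "map (tau n) (rev [r+2..<n-r+1]) = map (tau n) (map (tau n) [r+1..<n-r])"
    by (simp only: map_tau_upt[OF assms])
  also have "\<dots> = [r+1..<n-r]"
    unfolding map_map by (rule map_idI) (auto simp: tau_def)
  finally show ?thesis .
qed

lemma EXp_tau_twist:
  assumes "2 * r + 1 \<le> n"
  shows "EXp n r phi (\<lambda>i. E (tau n i)) = EXm n r phi E"
proof -
  have t: "tau n (n - r) = r + 1" using assms by (simp add: tau_def)
  have "EXp n r phi (\<lambda>i. E (tau n i))
      = foldr (\<lambda>j acc. qcomm phi (1/qq) (E j) acc) (map (tau n) [r+1..<n-r]) (E (tau n (n-r)))"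
    unfolding EXp_def foldr_map o_def ..
  also have "\<dots> = EXm n r phi E"
    unfolding EXm_def map_tau_upt[OF assms] t ..
  finally show ?thesis .
qed

lemma EXm_tau_twist:
  assumes "2 * r + 1 \<le> n"
  shows "EXm n r phi (\<lambda>i. E (tau n i)) = EXp n r phi E"
proof -
  have t: "tau n (r + 1) = n - r" using assms by (simp add: tau_def)
  have "EXm n r phi (\<lambda>i. E (tau n i))
      = foldr (\<lambda>j acc. qcomm phi (1/qq) (E j) acc) (map (tau n) (rev [r+2..<n-r+1])) (E (tau n (r + 1)))"
    unfolding EXm_def foldr_map o_def ..
  also have "\<dots> = EXp n r phi E"
    unfolding EXp_def map_tau_rev_upt[OF assms] t ..
  finally show ?thesis .
qed

lemma FXp_tau_twist:
  assumes "2 * r + 1 \<le> n"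
  shows "FXp n r phi (\<lambda>i. F (tau n i)) = FXm n r phi F"
proof -
  have t: "tau n (n - r) = r + 1" using assms by (simp add: tau_def)
  have "FXp n r phi (\<lambda>i. F (tau n i))
      = foldr (\<lambda>j acc. qcomm phi qq (F j) acc) (map (tau n) [r+1..<n-r]) (F (tau n (n-r)))"
    unfolding FXp_def foldr_map o_def ..
  also have "\<dots> = FXm n r phi F"
    unfolding FXm_def map_tau_upt[OF assms] t ..
  finally show ?thesis .
qed

lemma KX_tau_twist:
  assumes r: "2 * r + 1 \<le> n"
  shows "KX n r (\<lambda>mu. K (tau_weight n mu)) = KX n r K"
proof -
  have "bij_betw (tau n) {r+1..n-r} {r+1..n-r}"
    by (rule bij_betw_byWitness[where f' = "tau n"]) (auto simp: tau_def)
  hence "(\<Sum>j\<in>{r+1..n-r}. sroot n (tau n j)) = (\<Sum>j\<in>{r+1..n-r}. sroot n j)"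
    by (rule sum.reindex_bij_betw)
  moreover have "tau_weight n (\<Sum>j\<in>{r+1..n-r}. sroot n j) = (\<Sum>j\<in>{r+1..n-r}. sroot n (tau n j))"
    unfolding tau_weight_sum using r by (intro sum.cong) (auto simp: tau_weight_sroot)
  ultimately show ?thesis
    by (simp add: KX_def)
qed

lemma Lw_tau_twist:
  assumes "r \<in> {1..n}"
  shows "Lw n (\<lambda>mu. K (tau_weight n mu)) r = Lw n K (tau n r)"
  unfolding Lw_def tau_weight_diff tau_weight_sroot[OF assms]
    tau_weight_sroot[OF tau_in_range[OF assms]] tau_tau[OF assms] ..

lemma Bgen_tau_twist:
  fixes phi :: "'k::field_char_0 poly fract \<Rightarrow> 'a::ring_1" and E F :: "nat \<Rightarrow> 'a"
    and K :: "(nat \<Rightarrow> int) \<Rightarrow> 'a" and c :: "nat \<Rightarrow> 'k poly fract"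
  assumes "2 \<le> r" "2 * r + 1 \<le> n"
  defines "B' \<equiv> Bgen n r phi (\<lambda>i. E (tau n i)) (\<lambda>i. F (tau n i)) (\<lambda>mu. K (tau_weight n mu)) (\<lambda>i. c (tau n i))"
  shows "B' (r - 1) = Bgen n r phi E F K c (tau n (r - 1))"
    and "B' r = Bgen n r phi E F K c (tau n r)"
proof -
  have "r - 1 \<in> {1..n}" "r \<in> {1..n}" "tau n r \<noteq> r" "tau n (r - 1) \<noteq> r" "tau n (r - 1) \<noteq> tau n r"
    "r - 1 \<noteq> tau n r" "r - 1 \<noteq> r"
    using assms by (auto simp: tau_def)
  thus "B' (r - 1) = Bgen n r phi E F K c (tau n (r - 1))" and "B' r = Bgen n r phi E F K c (tau n r)"
    unfolding B'_def Bgen_def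
    by (simp_all add: tau_weight_uminus tau_weight_sroot tau_tau EXp_tau_twist[OF assms(2)])
qed

theorem lemmaA3:
  fixes n r :: nat
    and phi :: "'k::field_char_0 poly fract \<Rightarrow> 'a::ring_1"
    and E F :: "nat \<Rightarrow> 'a" and K :: "(nat \<Rightarrow> int) \<Rightarrow> 'a"
    and c :: "nat \<Rightarrow> 'k poly fract"
  assumes "1 \<le> n"
    and "2 \<le> r" and "r + 1 \<le> (n + 1) div 2"
    and "uq_rels n phi E F K"
    and "\<forall>i\<in>{1..n} - {r+1..n-r}. c i \<noteq> 0"
    and "\<forall>i\<in>{1..n} - ({r+1..n-r} \<union> {r, tau n r}). c i = c (tau n i)"
  shows
    "(let B = Bgen n r phi E F K c;
          S = qcomm phi qq (B (r - 1)) (qcomm phi qq (B r) (FXp n r phi F));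
          St = qcomm phi qq (B (tau n (r - 1))) (qcomm phi qq (B (tau n r)) (FXm n r phi F));
          Zr = - (phi (1 - qq powi (-2)) * EXp n r phi E * Lw n K (tau n r));
          Ztr = - (phi (1 - qq powi (-2)) * EXm n r phi E * Lw n K r)
      in Ztr * S = phi (1 / qq) * S * Ztr
                   + phi (1 - qq powi (-2)) * qcomm phi qq (B (r - 1)) (B r) * Lw n K r * KX n r K
       \<and> Zr * St = phi (1 / qq) * St * Zr
                   + phi (1 - qq powi (-2)) * qcomm phi qq (B (tau n (r - 1))) (B (tau n r))
                       * Lw n K (tau n r) * KX n r K)"
proof -
  have r: "2 * r + 1 \<le> n" and r_range: "r \<in> {1..n}"
    using assms(2,3) by auto
  interpret U: qsp_setting n phi E F K r c
    using assms(2,4) r by unfold_locales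
  interpret V: qsp_setting n phi "\<lambda>i. E (tau n i)" "\<lambda>i. F (tau n i)" "\<lambda>mu. K (tau_weight n mu)" r
      "\<lambda>i. c (tau n i)"
    using assms(2) r U.uq_rels_tau_twist by unfold_locales
  show ?thesis
    unfolding Let_def
    using U.Z_tau_r_commutation V.Z_tau_r_commutation[unfolded EXm_tau_twist[OF r] FXp_tau_twist[OF r]
        KX_tau_twist[OF r] Lw_tau_twist[OF r_range] Bgen_tau_twist[OF assms(2) r]]
    by blast
qed

end
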